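(* Let $r\ge 2$, $0\le s<r/2$, $n=\frac{r(r+1)}2+s$, and fix a line $L\subset\mathbb{P}^2$. If $\Gamma\in\mathbb{P}^{2[n]}$ is general, then there exists $\Gamma''\in L^{[r-1]}$ such that $\Gamma\cup\Gamma''$ lies on a pencil of plane curves of degree $r$, i.e. $h^0(\mathcal{I}_{\Gamma\cup\Gamma''}(r))\ge 2$.
   Context: Over $\mathbb{C}$. $\mathbb{P}^{2[n]}$ is the Hilbert scheme of length-$n$ zero-dimensional subschemes of $\mathbb{P}^2$ and $L^{[r-1]}$ the Hilbert scheme of length-$(r-1)$ subschemes of $L$. *)

theory Defs
  imports Complex_Main "HOL-Library.Poly_Mapping"
begin

(* Homogeneous coordinates of points of P^2 (over the complex numbers). *)
type_synonym pt3 = "complex \<times> complex \<times> complex"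

definition comb :: "complex \<Rightarrow> pt3 \<Rightarrow> complex \<Rightarrow> pt3 \<Rightarrow> pt3" where
  "comb a p b q = (a * fst p + b * fst q,
                   a * fst (snd p) + b * fst (snd q),
                   a * snd (snd p) + b * snd (snd q))"

(* p, q linearly independent in C^3, so that they span a line L in P^2 *)
definition lin_indep3 :: "pt3 \<Rightarrow> pt3 \<Rightarrow> bool" where
  "lin_indep3 p q \<longleftrightarrow> (\<forall>a b. comb a p b q = (0, 0, 0) \<longrightarrow> a = 0 \<and> b = 0)"

(* Ternary forms of degree r: c i j is the coefficient of x^i y^j z^(r-i-j). *)
definition is_tform :: "nat \<Rightarrow> (nat \<Rightarrow> nat \<Rightarrow> complex) \<Rightarrow> bool" where
  "is_tform r c \<longleftrightarrow> (\<forall>i j. r < i + j \<longrightarrow> c i j = 0)"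

definition tform_eval :: "nat \<Rightarrow> (nat \<Rightarrow> nat \<Rightarrow> complex) \<Rightarrow> pt3 \<Rightarrow> complex" where
  "tform_eval r c v = (case v of (x, y, z) \<Rightarrow>
      (\<Sum>i\<le>r. \<Sum>j\<le>r - i. c i j * x ^ i * y ^ j * z ^ (r - i - j)))"

definition bform_eval :: "nat \<Rightarrow> (nat \<Rightarrow> complex) \<Rightarrow> complex \<Rightarrow> complex \<Rightarrow> complex" where
  "bform_eval d g s t = (\<Sum>k\<le>d. g k * s ^ k * t ^ (d - k))"

definition nonzero_bform :: "nat \<Rightarrow> (nat \<Rightarrow> complex) \<Rightarrow> bool" where
  "nonzero_bform d g \<longleftrightarrow> (\<exists>k\<le>d. g k \<noteq> 0)"

(* The form c vanishes on the reduced points (x_i : y_i : 1), i < n (the scheme Gamma). *)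
definition vanishes_on_pts :: "nat \<Rightarrow> (nat \<Rightarrow> nat \<Rightarrow> complex) \<Rightarrow> nat \<Rightarrow> (nat \<Rightarrow> complex \<times> complex) \<Rightarrow> bool" where
  "vanishes_on_pts r c n \<gamma> \<longleftrightarrow> (\<forall>i<n. tform_eval r c (fst (\<gamma> i), snd (\<gamma> i), 1) = 0)"

(* Gamma'' in L^[d]: the length-d subscheme of L = span(p,q) cut out by the nonzero binary
   form g of degree d in the parameters (s,t) of L.  A degree-r form c lies in the ideal of
   Gamma'' iff its restriction c(s p + t q) is divisible by g, i.e. equals g * h with h a
   binary form of degree r - d.  Here d = r - 1, so h is linear. *)
definition in_ideal_line_scheme :: "nat \<Rightarrow> (nat \<Rightarrow> nat \<Rightarrow> complex) \<Rightarrow> pt3 \<Rightarrow> pt3 \<Rightarrow> (nat \<Rightarrow> complex) \<Rightarrow> bool" where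
  "in_ideal_line_scheme r c p q g \<longleftrightarrow>
     (\<exists>h0 h1. \<forall>s t. tform_eval r c (comb s p t q) = bform_eval (r - 1) g s t * (h0 * s + h1 * t))"

(* h^0(I_{Gamma \<union> Gamma''}(r)) \<ge> 2: two linearly independent degree-r forms in
   I_Gamma \<inter> I_Gamma'' *)
definition h0_ideal_ge_2 :: "nat \<Rightarrow> nat \<Rightarrow> (nat \<Rightarrow> complex \<times> complex) \<Rightarrow> pt3 \<Rightarrow> pt3 \<Rightarrow> (nat \<Rightarrow> complex) \<Rightarrow> bool" where
  "h0_ideal_ge_2 r n \<gamma> p q g \<longleftrightarrow>
     (\<exists>c1 c2. is_tform r c1 \<and> is_tform r c2 \<and>
        (\<forall>a b. (\<forall>i j. a * c1 i j + b * c2 i j = 0) \<longrightarrow> a = 0 \<and> b = 0) \<and>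
        vanishes_on_pts r c1 n \<gamma> \<and> vanishes_on_pts r c2 n \<gamma> \<and>
        in_ideal_line_scheme r c1 p q g \<and> in_ideal_line_scheme r c2 p q g)"

(* Multivariate polynomials over C as finitely supported maps from monomials to coefficients *)
definition mpoly_eval :: "((nat \<Rightarrow>\<^sub>0 nat) \<Rightarrow>\<^sub>0 complex) \<Rightarrow> (nat \<Rightarrow> complex) \<Rightarrow> complex" where
  "mpoly_eval P x = (\<Sum>m\<in>Poly_Mapping.keys P. Poly_Mapping.lookup P m * (\<Prod>v::nat\<in>Poly_Mapping.keys m. x v ^ Poly_Mapping.lookup m v))"

definition mpoly_vars :: "((nat \<Rightarrow>\<^sub>0 nat) \<Rightarrow>\<^sub>0 complex) \<Rightarrow> nat set" where
  "mpoly_vars P = \<Union> (Poly_Mapping.keys ` Poly_Mapping.keys P)"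

(* "Q holds for a general Gamma in P^2[n]": there is a nonzero polynomial P in the 2n affine
   coordinates of n points such that Q holds whenever P does not vanish.  *)
definition general_pts :: "nat \<Rightarrow> ((nat \<Rightarrow> complex \<times> complex) \<Rightarrow> bool) \<Rightarrow> bool" where
  "general_pts n Q \<longleftrightarrow>
     (\<exists>P. P \<noteq> 0 \<and> mpoly_vars P \<subseteq> {..<2 * n} \<and>
        (\<forall>\<gamma>. mpoly_eval P (\<lambda>v. if even v then fst (\<gamma> (v div 2)) else snd (\<gamma> (v div 2))) \<noteq> 0
              \<longrightarrow> Q \<gamma>))"

end

theory Submission
  imports Defs "HOL-Computational_Algebra.Polynomial"
begin

(* The conclusion holds for EVERY configuration of n points (so "general" is witnessed by the
   constant polynomial 1), by a dimension count.  Write N = (r+1)(r+2)/2 for the number of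
   degree-r monomials and K for the space of degree-r forms through Gamma vanishing on L.
   (1) The restriction of a ternary form c to L = span(p,q) is a binary form of degree r whose
       coefficients depend linearly on c; c lies in the ideal of the subscheme of L cut out by
       g iff this restriction is g * (a s + b t).
   (2) A homogeneous linear system with more unknowns than equations has a nonzero solution.
   (3) If K = 0, solve for g (r unknowns) and two forms c1, c2 (2N unknowns) through Gamma with
       c1|L = s g and c2|L = t g: 2(r+1+n) equations, fewer than r + 2N since 2s < r.  As K = 0,
       g is nonzero, and then s g, t g (hence c1, c2) are independent.
   (4) If some k0 in K is nonzero, say k0_{i0 j0} <> 0, solve for g and c1 with c1|L = s g and
       c1_{i0 j0} = 0 (r+1+n+1 < r+N equations).  If g <> 0 then k0, c1 span the pencil;
       otherwise c1 is a second element of K, independent of k0. *)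

section \<open>Restriction of ternary forms to a line\<close>

(* The restriction c(s p + q), as a polynomial in s; its coefficients are those of the binary
   form c(s p + t q). *)
definition line_restriction :: "nat \<Rightarrow> (nat \<Rightarrow> nat \<Rightarrow> complex) \<Rightarrow> pt3 \<Rightarrow> pt3 \<Rightarrow> complex poly" where
  "line_restriction r c p q =
     (\<Sum>i\<le>r. \<Sum>j\<le>r-i. smult (c i j) ([:fst q, fst p:]^i * [:fst (snd q), fst (snd p):]^j
                                       * [:snd (snd q), snd (snd p):]^(r-i-j)))"

lemma degree_line_restriction: "degree (line_restriction r c p q) \<le> r"
  unfolding line_restriction_def
proof (rule degree_sum_le, simp, rule degree_sum_le, simp)
  fix i j assume ij: "i \<in> {..r}" "j \<in> {..r-i}"
  let ?m = "[:fst q, fst p:]^i * [:fst (snd q), fst (snd p):]^j * [:snd (snd q), snd (snd p):]^(r-i-j)"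
  have "degree ?m \<le> i + j + (r-i-j)"
    by (intro order.trans[OF degree_mult_le] add_mono order.trans[OF degree_power_le]) auto
  also have "\<dots> = r" using ij by auto
  finally show "degree (smult (c i j) ?m) \<le> r"
    using degree_smult_le order.trans by blast
qed

lemma tform_on_line_dehomogenized:
  assumes "t \<noteq> 0"
  shows "tform_eval r c (comb s p t q) = t^r * poly (line_restriction r c p q) (s/t)"
proof -
  obtain p1 p2 p3 where p: "p = (p1,p2,p3)" by (cases p) auto
  obtain q1 q2 q3 where q: "q = (q1,q2,q3)" by (cases q) auto
  have lin: "\<And>a b. s*a + t*b = t * (b + s/t*a)" using assms by (simp add: field_simps)
  have monomial: "c i j * (s*p1+t*q1)^i * (s*p2+t*q2)^j * (s*p3+t*q3)^(r-i-j)
     = t^r * (c i j * (poly [:q1,p1:] (s/t)^i * poly [:q2,p2:] (s/t)^j * poly [:q3,p3:] (s/t)^(r-i-j)))"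
    if ij: "i \<le> r" "j \<le> r - i" for i j
  proof -
    have "t^r = t^i * t^j * t^(r-i-j)"
      using ij by (simp flip: power_add)
    then show ?thesis unfolding lin by (simp add: power_mult_distrib mult.commute)
  qed
  show ?thesis
    unfolding tform_eval_def comb_def line_restriction_def p q
    by (simp only: poly_sum poly_smult poly_mult poly_power sum_distrib_left prod.case fst_conv snd_conv)
       (intro sum.cong refl monomial; simp)
qed

lemma bform_eval_dehomogenized:
  assumes "degree P \<le> d" "t \<noteq> 0"
  shows "bform_eval d (coeff P) s t = t^d * poly P (s/t)"
proof -
  have "poly P (s/t) = (\<Sum>k\<le>d. coeff P k * (s/t)^k)"
    unfolding poly_altdef by (rule sum.mono_neutral_left) (use assms le_degree in auto)
  then have "t^d * poly P (s/t) = (\<Sum>k\<le>d. t^d * (coeff P k * (s/t)^k))"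
    by (simp add: sum_distrib_left)
  also have "\<dots> = (\<Sum>k\<le>d. coeff P k * s^k * t^(d-k))"
  proof (rule sum.cong)
    fix k assume "k \<in> {..d}"
    then have "t^d = t^k * t^(d-k)" by (simp flip: power_add)
    then show "t^d * (coeff P k * (s/t)^k) = coeff P k * s^k * t^(d-k)"
      using assms by (simp add: power_divide field_simps)
  qed simp
  finally show ?thesis unfolding bform_eval_def ..
qed

lemma continuous_agree_at_0:
  fixes f g :: "complex \<Rightarrow> complex"
  assumes "continuous_on UNIV f" "continuous_on UNIV g" "\<And>t. t \<noteq> 0 \<Longrightarrow> f t = g t"
  shows "f 0 = g 0"
proof -
  have f: "(f \<longlongrightarrow> f 0) (at 0)" and g: "(g \<longlongrightarrow> g 0) (at 0)"
    using assms(1,2) by (simp_all add: continuous_on_def)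
  have "eventually (\<lambda>t. f t = g t) (at 0)" using assms(3) by (auto simp: eventually_at_filter)
  then have "(g \<longlongrightarrow> f 0) (at 0)" using f tendsto_cong by blast
  then show ?thesis using g tendsto_unique at_neq_bot by blast
qed

lemma tform_on_line:
  "tform_eval r c (comb s p t q) = bform_eval r (coeff (line_restriction r c p q)) s t"
proof -
  have off0: "tform_eval r c (comb s p t q) = bform_eval r (coeff (line_restriction r c p q)) s t"
    if "t \<noteq> 0" for t
    using that tform_on_line_dehomogenized bform_eval_dehomogenized degree_line_restriction by metis
  have "(\<lambda>t. tform_eval r c (comb s p t q)) 0 = (\<lambda>t. bform_eval r (coeff (line_restriction r c p q)) s t) 0"
  proof (rule continuous_agree_at_0)
    show "continuous_on UNIV (\<lambda>t. tform_eval r c (comb s p t q))"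
      unfolding tform_eval_def comb_def by (auto intro!: continuous_intros)
    show "continuous_on UNIV (\<lambda>t. bform_eval r (coeff (line_restriction r c p q)) s t)"
      unfolding bform_eval_def by (auto intro!: continuous_intros)
  qed (rule off0)
  then show ?thesis using off0 by (cases "t = 0") auto
qed

lemma coeff_line_restriction_lincomb:
  "coeff (line_restriction r (\<lambda>i j. a * c1 i j + b * c2 i j) p q) k
     = a * coeff (line_restriction r c1 p q) k + b * coeff (line_restriction r c2 p q) k"
  unfolding line_restriction_def coeff_sum coeff_smult
  by (simp add: sum_distrib_left sum.distrib algebra_simps)

lemma tform_eval_lincomb:
  "tform_eval r (\<lambda>i j. a * c1 i j + b * c2 i j) v = a * tform_eval r c1 v + b * tform_eval r c2 v"
  unfolding tform_eval_def by (cases v) (simp add: sum_distrib_left sum.distrib algebra_simps)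

lemma bform_eval_lincomb:
  "bform_eval d (\<lambda>k. a * f k + b * g k) s t = a * bform_eval d f s t + b * bform_eval d g s t"
  unfolding bform_eval_def by (simp add: sum_distrib_left sum.distrib algebra_simps)

lemma line_restriction_relation:
  assumes "\<forall>i j. a * c1 i j + b * c2 i j = 0"
  shows "a * coeff (line_restriction r c1 p q) k + b * coeff (line_restriction r c2 p q) k = 0"
proof -
  have "(\<lambda>i j. a * c1 i j + b * c2 i j) = (\<lambda>i j. 0)" using assms by auto
  then have "coeff (line_restriction r (\<lambda>i j. a * c1 i j + b * c2 i j) p q) k = 0"
    by (simp add: line_restriction_def)
  then show ?thesis by (simp add: coeff_line_restriction_lincomb)
qed

section \<open>Forms in the ideal of a subscheme of the line\<close>

(* shift g is the coefficient sequence of s * g. *)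
definition shift :: "(nat \<Rightarrow> complex) \<Rightarrow> nat \<Rightarrow> complex" where
  "shift g k = (if k = 0 then 0 else g (k - 1))"

lemma bform_eval_shift:
  assumes "1 \<le> d"
  shows "bform_eval d (shift g) s t = bform_eval (d-1) g s t * s"
proof -
  obtain m where m: "d = Suc m" using assms by (cases d) auto
  have "bform_eval d (shift g) s t = (\<Sum>k\<le>m. g k * s ^ Suc k * t ^ (m - k))"
    unfolding bform_eval_def m by (simp only: sum.atMost_Suc_shift) (simp add: shift_def)
  also have "\<dots> = bform_eval (d-1) g s t * s"
    unfolding bform_eval_def m by (simp add: sum_distrib_right sum_distrib_left algebra_simps)
  finally show ?thesis .
qed

lemma bform_eval_lower_degree:
  assumes "1 \<le> d" "g d = 0"
  shows "bform_eval d g s t = bform_eval (d-1) g s t * t"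
proof -
  obtain m where m: "d = Suc m" using assms by (cases d) auto
  have "bform_eval d g s t = (\<Sum>k\<le>m. g k * s ^ k * t ^ (m - k) * t)"
    unfolding bform_eval_def m using assms m by (simp add: Suc_diff_le mult_ac)
  then show ?thesis unfolding bform_eval_def m by (simp add: sum_distrib_right)
qed

definition restricts_to ::
    "nat \<Rightarrow> (nat \<Rightarrow> nat \<Rightarrow> complex) \<Rightarrow> pt3 \<Rightarrow> pt3 \<Rightarrow> complex \<Rightarrow> complex \<Rightarrow> (nat \<Rightarrow> complex) \<Rightarrow> bool" where
  "restricts_to r c p q a b g \<longleftrightarrow>
     (\<forall>k\<le>r. coeff (line_restriction r c p q) k = a * shift g k + b * g k)"

lemma in_ideal_line_schemeI:
  assumes "1 \<le> r" "g r = 0" "restricts_to r c p q a b g"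
  shows "in_ideal_line_scheme r c p q g"
  unfolding in_ideal_line_scheme_def
proof (intro exI allI)
  fix s t
  have "tform_eval r c (comb s p t q) = bform_eval r (\<lambda>k. a * shift g k + b * g k) s t"
    unfolding tform_on_line bform_eval_def using assms(3) by (intro sum.cong) (auto simp: restricts_to_def)
  also have "\<dots> = bform_eval (r - 1) g s t * (a * s + b * t)"
    using assms(1,2) by (simp add: bform_eval_lincomb bform_eval_shift bform_eval_lower_degree algebra_simps)
  finally show "tform_eval r c (comb s p t q) = bform_eval (r - 1) g s t * (a * s + b * t)" .
qed

lemma shift_independent:
  assumes "k0 < r" "g k0 \<noteq> 0" and rel: "\<And>k. k \<le> r \<Longrightarrow> a * shift g k + b * g k = 0"
  shows "a = 0 \<and> b = 0"
proof -
  define m where "m = (LEAST k. g k \<noteq> 0)"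
  have gm: "g m \<noteq> 0" unfolding m_def by (rule LeastI[of _ k0]) (fact assms(2))
  have "m \<le> k0" unfolding m_def by (rule Least_le) (fact assms(2))
  have "g (m - 1) = 0" if "m \<noteq> 0"
    using not_less_Least[of "m - 1" "\<lambda>k. g k \<noteq> 0"] that by (simp add: m_def)
  then have "shift g m = 0" by (simp add: shift_def)
  then have b: "b = 0" using rel[of m] \<open>m \<le> k0\<close> assms(1) gm by simp
  have "a * g m + b * g (m+1) = 0" using rel[of "m+1"] \<open>m \<le> k0\<close> assms(1) by (simp add: shift_def)
  then show ?thesis using b gm by simp
qed

(* Forms through Gamma that vanish identically on L: they lie in the ideal of every
   subscheme of L. *)
definition through_pts_and_line ::
    "nat \<Rightarrow> nat \<Rightarrow> (nat \<Rightarrow> complex \<times> complex) \<Rightarrow> pt3 \<Rightarrow> pt3 \<Rightarrow> (nat \<Rightarrow> nat \<Rightarrow> complex) \<Rightarrow> bool" where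
  "through_pts_and_line r n \<gamma> p q c \<longleftrightarrow>
     is_tform r c \<and> vanishes_on_pts r c n \<gamma> \<and> (\<forall>k\<le>r. coeff (line_restriction r c p q) k = 0)"

definition independent_forms :: "(nat \<Rightarrow> nat \<Rightarrow> complex) \<Rightarrow> (nat \<Rightarrow> nat \<Rightarrow> complex) \<Rightarrow> bool" where
  "independent_forms c1 c2 \<longleftrightarrow> (\<forall>a b. (\<forall>i j. a * c1 i j + b * c2 i j = 0) \<longrightarrow> a = 0 \<and> b = 0)"

lemma h0_ideal_ge_2I:
  assumes "is_tform r c1" "is_tform r c2" "independent_forms c1 c2"
    "vanishes_on_pts r c1 n \<gamma>" "vanishes_on_pts r c2 n \<gamma>"
    "in_ideal_line_scheme r c1 p q g" "in_ideal_line_scheme r c2 p q g"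
  shows "h0_ideal_ge_2 r n \<gamma> p q g"
  using assms unfolding h0_ideal_ge_2_def independent_forms_def by blast

lemma independent_formsI:
  assumes "c1 i0 j0 \<noteq> 0" "c2 i0 j0 = 0" "c2 i j \<noteq> 0"
  shows "independent_forms c1 c2"
  unfolding independent_forms_def
proof (intro allI impI)
  fix a b assume rel: "\<forall>i j. a * c1 i j + b * c2 i j = 0"
  then have "a = 0" using rel[rule_format, of i0 j0] assms(1,2) by simp
  then show "a = 0 \<and> b = 0" using rel[rule_format, of i j] assms(3) by simp
qed

section \<open>Homogeneous linear systems\<close>

(* More unknowns (indexed by I) than equations (indexed by R): a nonzero solution exists.
   Proof by Gaussian elimination, one equation at a time. *)
lemma homogeneous_system_nontrivial:
  fixes A :: "'b \<Rightarrow> 'a \<Rightarrow> 'c::field"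
  assumes "finite R" "finite I" "card R < card I"
  shows "\<exists>x. (\<exists>u\<in>I. x u \<noteq> 0) \<and> (\<forall>w\<in>R. (\<Sum>u\<in>I. A w u * x u) = 0)"
  using assms
proof (induction R arbitrary: I A rule: finite_induct)
  case empty
  then obtain u where "u \<in> I" by fastforce
  then show ?case by (intro exI[of _ "\<lambda>v. 1"]) auto
next
  case (insert w0 R)
  show ?case
  proof (cases "\<forall>u\<in>I. A w0 u = 0")
    case True
    have "card R < card I" using insert.hyps insert.prems by simp
    then obtain x where "\<exists>u\<in>I. x u \<noteq> 0" "\<forall>w\<in>R. (\<Sum>u\<in>I. A w u * x u) = 0"
      using insert.IH[of I A] insert.prems by blast
    then show ?thesis using True by (intro exI[of _ x]) auto
  next
    case False
    then obtain j where j: "j \<in> I" "A w0 j \<noteq> 0" by auto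
    define I' where "I' = I - {j}"
    (* eliminate the unknown j from the remaining equations *)
    define B where "B w u = A w u - A w j * A w0 u / A w0 j" for w u
    have "finite I'" "card R < card I'" using insert j by (simp_all add: I'_def)
    then obtain y where y: "\<exists>u\<in>I'. y u \<noteq> 0" "\<forall>w\<in>R. (\<Sum>u\<in>I'. B w u * y u) = 0"
      using insert.IH[of I' B] by blast
    define x where "x u = (if u = j then - (\<Sum>i\<in>I'. A w0 i * y i) / A w0 j else y u)" for u
    have split: "(\<Sum>u\<in>I. f u) = f j + (\<Sum>u\<in>I'. f u)" for f :: "'a \<Rightarrow> 'c"
      using j insert by (simp add: I'_def sum.remove)
    have xI': "x u = y u" if "u \<in> I'" for u using that by (simp add: I'_def x_def)
    have "(\<Sum>u\<in>I. A w0 u * x u) = 0"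
      unfolding split using xI' j by (simp add: x_def)
    moreover have "(\<Sum>u\<in>I. A w u * x u) = 0" if "w \<in> R" for w
    proof -
      have "(\<Sum>u\<in>I. A w u * x u) = A w j * x j + (\<Sum>u\<in>I'. A w u * y u)"
        unfolding split using xI' by simp
      also have "\<dots> = (\<Sum>u\<in>I'. B w u * y u)"
        using j by (simp add: x_def B_def algebra_simps sum_subtractf sum_distrib_left sum_divide_distrib)
      finally show ?thesis using y that by auto
    qed
    moreover have "\<exists>u\<in>I. x u \<noteq> 0" using y(1) xI' by (force simp: I'_def)
    ultimately show ?thesis by (intro exI[of _ x]) auto
  qed
qed

definition linear_functional :: "(('a \<Rightarrow> 'c::field) \<Rightarrow> 'c) \<Rightarrow> bool" where
  "linear_functional f \<longleftrightarrow> (\<forall>a b x y. f (\<lambda>u. a * x u + b * y u) = a * f x + b * f y)"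

definition depends_only_on :: "'a set \<Rightarrow> (('a \<Rightarrow> 'c) \<Rightarrow> 'd) \<Rightarrow> bool" where
  "depends_only_on I f \<longleftrightarrow> (\<forall>x y. (\<forall>u\<in>I. x u = y u) \<longrightarrow> f x = f y)"

lemma depends_only_on_mono: "depends_only_on I f \<Longrightarrow> I \<subseteq> J \<Longrightarrow> depends_only_on J f"
  unfolding depends_only_on_def by blast

lemma functionals_common_zero:
  fixes F :: "(('a \<Rightarrow> 'c::field) \<Rightarrow> 'c) set"
  assumes "finite F" "finite I" "card F < card I"
    and F: "\<And>f. f \<in> F \<Longrightarrow> linear_functional f \<and> depends_only_on I f"
  shows "\<exists>x. (\<exists>u\<in>I. x u \<noteq> 0) \<and> (\<forall>f\<in>F. f x = 0)"
proof -
  define e where "e v = (\<lambda>u. if u = v then 1 else 0::'c)" for v :: 'a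
  have expand: "f (\<lambda>u. \<Sum>v\<in>J. x v * e v u) = (\<Sum>v\<in>J. f (e v) * x v)"
    if "linear_functional f" "finite J" for f x J
    using that(2)
  proof (induction J rule: finite_induct)
    case empty
    then show ?case using that(1)[unfolded linear_functional_def, rule_format, of 0 "\<lambda>u. 0" 0] by simp
  next
    case (insert v J)
    have "f (\<lambda>u. \<Sum>w\<in>insert v J. x w * e w u) = f (\<lambda>u. x v * e v u + 1 * (\<Sum>w\<in>J. x w * e w u))"
      using insert by simp
    also have "\<dots> = x v * f (e v) + f (\<lambda>u. \<Sum>w\<in>J. x w * e w u)"
      using that(1)[unfolded linear_functional_def, rule_format, of "x v" "e v" 1] by simp
    finally show ?case using insert by (simp add: mult.commute)
  qed
  have coords: "f x = (\<Sum>v\<in>I. f (e v) * x v)" if "f \<in> F" for f x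
  proof -
    have "f x = f (\<lambda>u. \<Sum>v\<in>I. x v * e v u)"
      using F[OF that] assms(2)
      by (auto simp: depends_only_on_def e_def if_distrib sum.delta cong: if_cong)
    then show ?thesis using expand F[OF that] assms(2) by simp
  qed
  obtain x where "\<exists>u\<in>I. x u \<noteq> 0" "\<forall>f\<in>F. (\<Sum>v\<in>I. f (e v) * x v) = 0"
    using homogeneous_system_nontrivial[where A = "\<lambda>f v. f (e v)", OF assms(1-3)] by blast
  then show ?thesis using coords by auto
qed

section \<open>The linear system for a form with prescribed restriction to L\<close>

(* Unknowns: the coefficients g_k (k < r) of a binary form of degree r - 1, and the
   coefficients c_m,i,j of several ternary forms of degree r. *)
datatype unknown = Coef_g nat | Coef_c nat nat nat

definition bform_of :: "nat \<Rightarrow> (unknown \<Rightarrow> complex) \<Rightarrow> nat \<Rightarrow> complex" where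
  "bform_of r x k = (if k < r then x (Coef_g k) else 0)"

definition tform_of :: "nat \<Rightarrow> nat \<Rightarrow> (unknown \<Rightarrow> complex) \<Rightarrow> nat \<Rightarrow> nat \<Rightarrow> complex" where
  "tform_of r m x i j = (if i + j \<le> r then x (Coef_c m i j) else 0)"

definition monomials :: "nat \<Rightarrow> (nat \<times> nat) set" where
  "monomials r = Sigma {..r} (\<lambda>i. {..r-i})"

definition g_unknowns :: "nat \<Rightarrow> unknown set" where
  "g_unknowns r = Coef_g ` {..<r}"

definition c_unknowns :: "nat \<Rightarrow> nat \<Rightarrow> unknown set" where
  "c_unknowns r m = (\<lambda>(i, j). Coef_c m i j) ` monomials r"

lemma mem_monomials [simp]: "(i, j) \<in> monomials r \<longleftrightarrow> i + j \<le> r"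
  unfolding monomials_def by auto

lemma mem_unknowns [simp]:
  "Coef_g k \<in> g_unknowns r \<longleftrightarrow> k < r"
  "Coef_c m' i j \<in> c_unknowns r m \<longleftrightarrow> m' = m \<and> i + j \<le> r"
  unfolding g_unknowns_def c_unknowns_def by force+

lemma monomials_card: "2 * card (monomials r) = (r+1)*(r+2)"
proof -
  have "2 * (\<Sum>i\<le>r. r - i + 1) = (r+1)*(r+2)"
  proof (induction r)
    case (Suc r)
    have "(\<Sum>i\<le>Suc r. Suc r - i + 1) = (Suc r + 1) + (\<Sum>i\<le>r. r - i + 1)"
      by (simp only: sum.atMost_Suc_shift) simp
    then show ?case using Suc by simp
  qed simp
  then show ?thesis unfolding monomials_def by simp
qed

lemma card_unknowns:
  "card (g_unknowns r) = r" "card (c_unknowns r m) = card (monomials r)"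
  "finite (g_unknowns r)" "finite (c_unknowns r m)"
  unfolding g_unknowns_def c_unknowns_def
  by (auto simp: card_image inj_on_def monomials_def)

lemma unknowns_disjoint:
  "g_unknowns r \<inter> c_unknowns r m = {}" "m \<noteq> m' \<Longrightarrow> c_unknowns r m \<inter> c_unknowns r m' = {}"
  unfolding g_unknowns_def c_unknowns_def by auto

lemma nonzero_g_unknown: "u \<in> g_unknowns r \<Longrightarrow> x u \<noteq> 0 \<Longrightarrow> \<exists>k<r. bform_of r x k \<noteq> 0"
  unfolding g_unknowns_def bform_of_def by auto

lemma nonzero_c_unknown: "u \<in> c_unknowns r m \<Longrightarrow> x u \<noteq> 0 \<Longrightarrow> \<exists>i j. tform_of r m x i j \<noteq> 0"
  unfolding c_unknowns_def tform_of_def by force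

definition form_equations :: "nat \<Rightarrow> nat \<Rightarrow> (nat \<Rightarrow> complex \<times> complex) \<Rightarrow> pt3 \<Rightarrow> pt3 \<Rightarrow>
    nat \<Rightarrow> complex \<Rightarrow> complex \<Rightarrow> ((unknown \<Rightarrow> complex) \<Rightarrow> complex) set" where
  "form_equations r n \<gamma> p q m a b =
     (\<lambda>k x. coeff (line_restriction r (tform_of r m x) p q) k
             - (a * shift (bform_of r x) k + b * bform_of r x k)) ` {..r}
   \<union> (\<lambda>i x. tform_eval r (tform_of r m x) (fst (\<gamma> i), snd (\<gamma> i), 1)) ` {..<n}"

lemma form_equations_card:
  "finite (form_equations r n \<gamma> p q m a b)" "card (form_equations r n \<gamma> p q m a b) \<le> r + 1 + n"
proof -
  show "finite (form_equations r n \<gamma> p q m a b)" by (simp add: form_equations_def)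
  have "card (form_equations r n \<gamma> p q m a b) \<le> card {..r} + card {..<n}"
    unfolding form_equations_def by (intro card_Un_le[THEN order.trans] add_mono card_image_le) auto
  then show "card (form_equations r n \<gamma> p q m a b) \<le> r + 1 + n" by simp
qed

lemma tform_of_lincomb:
  "tform_of r m (\<lambda>u. a * x u + b * y u) = (\<lambda>i j. a * tform_of r m x i j + b * tform_of r m y i j)"
  by (intro ext) (simp add: tform_of_def)

lemma bform_of_lincomb:
  "bform_of r (\<lambda>u. a * x u + b * y u) = (\<lambda>k. a * bform_of r x k + b * bform_of r y k)"
  by (intro ext) (simp add: bform_of_def)

lemma form_equations_linear:
  assumes "f \<in> form_equations r n \<gamma> p q m a b"
  shows "linear_functional f" "depends_only_on (g_unknowns r \<union> c_unknowns r m) f"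
proof -
  show "linear_functional f"
    using assms unfolding form_equations_def linear_functional_def
    by (auto simp: tform_of_lincomb bform_of_lincomb coeff_line_restriction_lincomb
                   tform_eval_lincomb shift_def algebra_simps)
  show "depends_only_on (g_unknowns r \<union> c_unknowns r m) f"
    unfolding depends_only_on_def
  proof (intro allI impI)
    fix x y :: "unknown \<Rightarrow> complex"
    assume "\<forall>u\<in>g_unknowns r \<union> c_unknowns r m. x u = y u"
    then have "tform_of r m x = tform_of r m y" "bform_of r x = bform_of r y"
      by (auto simp: tform_of_def bform_of_def fun_eq_iff)
    then show "f x = f y" using assms unfolding form_equations_def by auto
  qed
qed

lemma form_equations_solution:
  assumes "\<forall>f\<in>form_equations r n \<gamma> p q m a b. f x = 0"
  shows "vanishes_on_pts r (tform_of r m x) n \<gamma>" "restricts_to r (tform_of r m x) p q a b (bform_of r x)"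
proof -
  show "vanishes_on_pts r (tform_of r m x) n \<gamma>"
    using assms unfolding form_equations_def vanishes_on_pts_def by auto
  have "\<forall>k\<le>r. coeff (line_restriction r (tform_of r m x) p q) k
               - (a * shift (bform_of r x) k + b * bform_of r x k) = 0"
    using assms unfolding form_equations_def by (simp add: ball_Un)
  then show "restricts_to r (tform_of r m x) p q a b (bform_of r x)"
    unfolding restricts_to_def by simp
qed

lemma is_tform_of: "is_tform r (tform_of r m x)"
  by (simp add: is_tform_def tform_of_def)

lemma dimension_count:
  fixes r s n N :: nat
  assumes "2 \<le> r" "2 * s < r" "n = r * (r + 1) div 2 + s" "2 * N = (r + 1) * (r + 2)"
  shows "2 * (r + 1 + n) < r + 2 * N" "r + 1 + n + 1 < r + N"
proof -
  have n: "2 * n = r * r + r + 2 * s" using assms(3) by (simp add: dvd_mult_div_cancel algebra_simps)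
  have N: "2 * N = r * r + 3 * r + 2" using assms(4) by (simp add: algebra_simps)
  show "2 * (r + 1 + n) < r + 2 * N" using n N assms(2) by simp
  show "r + 1 + n + 1 < r + N" using n N assms(1,2) by simp
qed

lemma two_forms_system_solvable:
  assumes r: "2 \<le> r" "2 * s < r" "n = r * (r + 1) div 2 + s"
  obtains g c1 c2 where "\<forall>k\<ge>r. g k = 0" "is_tform r c1" "is_tform r c2"
    "vanishes_on_pts r c1 n \<gamma>" "vanishes_on_pts r c2 n \<gamma>"
    "restricts_to r c1 p q 1 0 g" "restricts_to r c2 p q 0 1 g"
    "(\<exists>k<r. g k \<noteq> 0) \<or> (\<exists>i j. c1 i j \<noteq> 0) \<or> (\<exists>i j. c2 i j \<noteq> 0)"
proof -
  define I where "I = g_unknowns r \<union> c_unknowns r 1 \<union> c_unknowns r 2"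
  define F where "F = form_equations r n \<gamma> p q 1 1 0 \<union> form_equations r n \<gamma> p q 2 0 1"
  have "(g_unknowns r \<union> c_unknowns r 1) \<inter> c_unknowns r 2 = {}" "g_unknowns r \<inter> c_unknowns r 1 = {}"
    using unknowns_disjoint by (auto simp: Int_Un_distrib2)
  then have "card I = r + 2 * card (monomials r)"
    unfolding I_def by (simp add: card_Un_disjoint card_unknowns)
  moreover have "card F \<le> 2 * (r + 1 + n)"
    using card_Un_le[of "form_equations r n \<gamma> p q 1 1 0" "form_equations r n \<gamma> p q 2 0 1"]
      form_equations_card(2)[of r n \<gamma> p q 1 1 0] form_equations_card(2)[of r n \<gamma> p q 2 0 1]
    unfolding F_def mult_2 by linarith
  moreover have "2 * (r + 1 + n) < r + 2 * card (monomials r)"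
    using dimension_count(1)[OF r monomials_card] .
  ultimately have "card F < card I" by linarith
  moreover have "linear_functional f \<and> depends_only_on I f" if "f \<in> F" for f
    using that form_equations_linear unfolding F_def I_def by (blast intro: depends_only_on_mono)
  moreover have "finite F" "finite I"
    unfolding F_def I_def by (simp_all add: form_equations_card card_unknowns)
  ultimately obtain x where x_nz: "\<exists>u\<in>I. x u \<noteq> 0" and x_sol: "\<forall>f\<in>F. f x = 0"
    using functionals_common_zero[of F I] by blast
  show thesis
  proof (rule that[of "bform_of r x" "tform_of r 1 x" "tform_of r 2 x"])
    show "\<forall>k\<ge>r. bform_of r x k = 0" by (simp add: bform_of_def)
    show "is_tform r (tform_of r 1 x)" "is_tform r (tform_of r 2 x)" by (rule is_tform_of)+
    show "vanishes_on_pts r (tform_of r 1 x) n \<gamma>" "restricts_to r (tform_of r 1 x) p q 1 0 (bform_of r x)"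
      using form_equations_solution[of r n \<gamma> p q 1 1 0 x] x_sol by (simp_all add: F_def)
    show "vanishes_on_pts r (tform_of r 2 x) n \<gamma>" "restricts_to r (tform_of r 2 x) p q 0 1 (bform_of r x)"
      using form_equations_solution[of r n \<gamma> p q 2 0 1 x] x_sol by (simp_all add: F_def)
    show "(\<exists>k<r. bform_of r x k \<noteq> 0) \<or> (\<exists>i j. tform_of r 1 x i j \<noteq> 0) \<or> (\<exists>i j. tform_of r 2 x i j \<noteq> 0)"
      using x_nz nonzero_g_unknown nonzero_c_unknown unfolding I_def by blast
  qed
qed

lemma pivoted_form_system_solvable:
  assumes r: "2 \<le> r" "2 * s < r" "n = r * (r + 1) div 2 + s"
  obtains g c1 where "\<forall>k\<ge>r. g k = 0" "is_tform r c1" "vanishes_on_pts r c1 n \<gamma>"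
    "restricts_to r c1 p q 1 0 g" "c1 i0 j0 = 0" "(\<exists>k<r. g k \<noteq> 0) \<or> (\<exists>i j. c1 i j \<noteq> 0)"
proof -
  define pivot where "pivot x = tform_of r 1 x i0 j0" for x
  define I where "I = g_unknowns r \<union> c_unknowns r 1"
  define F where "F = insert pivot (form_equations r n \<gamma> p q 1 1 0)"
  have "card I = r + card (monomials r)"
    unfolding I_def using unknowns_disjoint by (simp add: card_Un_disjoint card_unknowns)
  moreover have "card F \<le> r + 1 + n + 1"
    using form_equations_card[of r n \<gamma> p q 1 1 0] unfolding F_def by (simp add: card_insert_if)
  moreover have "r + 1 + n + 1 < r + card (monomials r)"
    using dimension_count(2)[OF r monomials_card] .
  ultimately have "card F < card I" by linarith
  moreover have "linear_functional pivot \<and> depends_only_on I pivot"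
    by (auto simp: linear_functional_def depends_only_on_def pivot_def tform_of_def I_def)
  then have "linear_functional f \<and> depends_only_on I f" if "f \<in> F" for f
    using that form_equations_linear unfolding F_def I_def by blast
  moreover have "finite F" "finite I"
    unfolding F_def I_def by (simp_all add: form_equations_card card_unknowns)
  ultimately obtain x where x_nz: "\<exists>u\<in>I. x u \<noteq> 0" and x_sol: "\<forall>f\<in>F. f x = 0"
    using functionals_common_zero[of F I] by blast
  show thesis
  proof (rule that[of "bform_of r x" "tform_of r 1 x"])
    show "\<forall>k\<ge>r. bform_of r x k = 0" by (simp add: bform_of_def)
    show "is_tform r (tform_of r 1 x)" by (rule is_tform_of)
    show "vanishes_on_pts r (tform_of r 1 x) n \<gamma>" "restricts_to r (tform_of r 1 x) p q 1 0 (bform_of r x)"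
      using form_equations_solution[of r n \<gamma> p q 1 1 0 x] x_sol by (simp_all add: F_def)
    show "tform_of r 1 x i0 j0 = 0" using x_sol by (simp add: F_def pivot_def)
    show "(\<exists>k<r. bform_of r x k \<noteq> 0) \<or> (\<exists>i j. tform_of r 1 x i j \<noteq> 0)"
      using x_nz nonzero_g_unknown nonzero_c_unknown unfolding I_def by blast
  qed
qed

lemma through_pts_and_lineI:
  assumes "is_tform r c" "vanishes_on_pts r c n \<gamma>" "restricts_to r c p q a b (\<lambda>k. 0)"
  shows "through_pts_and_line r n \<gamma> p q c"
  using assms by (simp add: through_pts_and_line_def restricts_to_def shift_def)

(* No nonzero form through Gamma contains L: then g <> 0 in a solution of the two-form
   system, and c1|L = s g, c2|L = t g are independent. *)
lemma pencil_if_no_form_contains_line: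
  assumes r: "2 \<le> r" "2 * s < r" "n = r * (r + 1) div 2 + s"
    and none: "\<And>c. through_pts_and_line r n \<gamma> p q c \<Longrightarrow> \<forall>i j. c i j = 0"
  shows "\<exists>g. nonzero_bform (r - 1) g \<and> h0_ideal_ge_2 r n \<gamma> p q g"
proof -
  obtain g c1 c2 where g: "\<forall>k\<ge>r. g k = 0" and c: "is_tform r c1" "is_tform r c2"
    "vanishes_on_pts r c1 n \<gamma>" "vanishes_on_pts r c2 n \<gamma>"
    and e: "restricts_to r c1 p q 1 0 g" "restricts_to r c2 p q 0 1 g"
    and nontrivial: "(\<exists>k<r. g k \<noteq> 0) \<or> (\<exists>i j. c1 i j \<noteq> 0) \<or> (\<exists>i j. c2 i j \<noteq> 0)"
    by (rule two_forms_system_solvable[OF r])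
  have "\<exists>k<r. g k \<noteq> 0"
  proof (rule ccontr)
    assume "\<not> (\<exists>k<r. g k \<noteq> 0)"
    then have "g = (\<lambda>k. 0)" using g by (auto simp: fun_eq_iff not_less[symmetric])
    then have "through_pts_and_line r n \<gamma> p q c1" "through_pts_and_line r n \<gamma> p q c2"
      using c e by (auto intro: through_pts_and_lineI)
    then have "\<forall>i j. c1 i j = 0" "\<forall>i j. c2 i j = 0" using none by blast+
    then show False using nontrivial \<open>\<not> (\<exists>k<r. g k \<noteq> 0)\<close> by blast
  qed
  then obtain k0 where k0: "k0 < r" "g k0 \<noteq> 0" by blast
  have "independent_forms c1 c2"
    unfolding independent_forms_def
  proof (intro allI impI)
    fix a b assume rel: "\<forall>i j. a * c1 i j + b * c2 i j = 0"
    show "a = 0 \<and> b = 0"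
    proof (rule shift_independent[where g = g, OF k0])
      fix k assume "k \<le> r"
      then show "a * shift g k + b * g k = 0"
        using line_restriction_relation[OF rel, of r p q k] e by (simp add: restricts_to_def)
    qed
  qed
  then have "h0_ideal_ge_2 r n \<gamma> p q g"
    using c r g in_ideal_line_schemeI[OF _ _ e(1)] in_ideal_line_schemeI[OF _ _ e(2)]
    by (intro h0_ideal_ge_2I[of r c1 c2]) simp_all
  moreover have "nonzero_bform (r - 1) g" unfolding nonzero_bform_def using k0 by (auto intro!: exI[of _ k0])
  ultimately show ?thesis by blast
qed

(* Two independent forms through Gamma containing L: any subscheme of L will do, e.g. the
   one cut out by t^(r-1). *)
lemma pencil_if_two_forms_contain_line:
  assumes "1 \<le> r" "through_pts_and_line r n \<gamma> p q c1" "through_pts_and_line r n \<gamma> p q c2"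
    and "independent_forms c1 c2"
  shows "\<exists>g. nonzero_bform (r - 1) g \<and> h0_ideal_ge_2 r n \<gamma> p q g"
proof (intro exI conjI)
  define g :: "nat \<Rightarrow> complex" where "g k = (if k = 0 then 1 else 0)" for k
  show "nonzero_bform (r - 1) g" by (auto simp: nonzero_bform_def g_def)
  have "in_ideal_line_scheme r c p q g" if "through_pts_and_line r n \<gamma> p q c" for c
    using that assms(1) by (intro in_ideal_line_schemeI[where a = 0 and b = 0])
      (auto simp: through_pts_and_line_def restricts_to_def g_def)
  then show "h0_ideal_ge_2 r n \<gamma> p q g"
    using assms by (intro h0_ideal_ge_2I) (auto simp: through_pts_and_line_def)
qed

(* Some nonzero k0 through Gamma contains L, with k0_{i0 j0} <> 0: solve the pivoted system.
   If g <> 0, comparing the coefficient of s^(k+1) t^(r-k-1) (g_k <> 0) and then the pivot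
   coefficient shows k0, c1 independent; if g = 0, c1 is a second form containing L. *)
lemma pencil_if_some_form_contains_line:
  assumes r: "2 \<le> r" "2 * s < r" "n = r * (r + 1) div 2 + s"
    and k0: "through_pts_and_line r n \<gamma> p q k0" "k0 i0 j0 \<noteq> 0"
  shows "\<exists>g. nonzero_bform (r - 1) g \<and> h0_ideal_ge_2 r n \<gamma> p q g"
proof -
  obtain g c1 where g: "\<forall>k\<ge>r. g k = 0" and c1: "is_tform r c1" "vanishes_on_pts r c1 n \<gamma>"
    and e: "restricts_to r c1 p q 1 0 g" and pivot: "c1 i0 j0 = 0"
    and nontrivial: "(\<exists>k<r. g k \<noteq> 0) \<or> (\<exists>i j. c1 i j \<noteq> 0)"
    by (rule pivoted_form_system_solvable[OF r])
  have k0_restr: "restricts_to r k0 p q 0 0 g"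
    using k0(1) by (simp add: through_pts_and_line_def restricts_to_def)
  show ?thesis
  proof (cases "\<exists>k<r. g k \<noteq> 0")
    case True
    then obtain k where k: "k < r" "g k \<noteq> 0" by blast
    have "independent_forms k0 c1"
      unfolding independent_forms_def
    proof (intro allI impI)
      fix a b assume rel: "\<forall>i j. a * k0 i j + b * c1 i j = 0"
      have "b * g k = 0"
        using line_restriction_relation[OF rel, of r p q "k + 1"] e k0_restr k
        by (simp add: restricts_to_def shift_def)
      then have "b = 0" using k by simp
      then show "a = 0 \<and> b = 0" using rel[rule_format, of i0 j0] k0(2) by simp
    qed
    then have "h0_ideal_ge_2 r n \<gamma> p q g"
      using k0(1) c1 r g in_ideal_line_schemeI[OF _ _ k0_restr] in_ideal_line_schemeI[OF _ _ e]
      by (intro h0_ideal_ge_2I[of r k0 c1]) (simp_all add: through_pts_and_line_def)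
    moreover have "nonzero_bform (r - 1) g" unfolding nonzero_bform_def using k by (auto intro!: exI[of _ k])
    ultimately show ?thesis by blast
  next
    case False
    then have "g = (\<lambda>k. 0)" using g by (auto simp: fun_eq_iff not_less[symmetric])
    then have c1_line: "through_pts_and_line r n \<gamma> p q c1"
      using c1 e by (auto intro: through_pts_and_lineI)
    obtain i j where "c1 i j \<noteq> 0" using nontrivial False by blast
    then have "independent_forms k0 c1" using independent_formsI k0(2) pivot by blast
    then show ?thesis using pencil_if_two_forms_contain_line k0(1) c1_line r(1) by simp
  qed
qed

lemma general_pts_if_always:
  assumes "\<And>\<gamma>. Q \<gamma>"
  shows "general_pts n Q"
  unfolding general_pts_def
proof (intro exI conjI)
  show "Poly_Mapping.single 0 (1::complex) \<noteq> 0" by simp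
  show "mpoly_vars (Poly_Mapping.single 0 1) \<subseteq> {..<2 * n}" by (simp add: mpoly_vars_def)
qed (use assms in simp)

theorem mainTheorem19:
  fixes r s n :: nat and p q :: pt3
  assumes "2 \<le> r" and "2 * s < r" and "n = r * (r + 1) div 2 + s" and "lin_indep3 p q"
  shows "general_pts n (\<lambda>\<gamma>. \<exists>g. nonzero_bform (r - 1) g \<and> h0_ideal_ge_2 r n \<gamma> p q g)"
proof (rule general_pts_if_always)
  fix \<gamma>
  show "\<exists>g. nonzero_bform (r - 1) g \<and> h0_ideal_ge_2 r n \<gamma> p q g"
  proof (cases "\<exists>c i j. through_pts_and_line r n \<gamma> p q c \<and> c i j \<noteq> 0")
    case True
    then obtain c i j where "through_pts_and_line r n \<gamma> p q c" "c i j \<noteq> 0" by blast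
    then show ?thesis by (rule pencil_if_some_form_contains_line[OF assms(1-3)])
  next
    case False
    then show ?thesis by (intro pencil_if_no_form_contains_line[OF assms(1-3)]) blast
  qed
qed

end
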